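(* Let $G=(V,E)$ be a directed graph, $s\neq t$ vertices and $k\ge 5$ an integer. For each $w\in D$ let $\widehat{In}_D(w)$ be any subset of $In_D(w)$ of size $k-2$ if $|In_D(w)|>k-2$, and $\widehat{In}_D(w)=In_D(w)$ otherwise. Let $e(u,v)$ be an undetermined edge. Then $e(u,v)$ is an edge of $SPG_k(s,t)$ if and only if there exist an integer $l$ and vertices $v_2,\dots,v_{l-2}$ forming a simple path $q^*$ in $G$ of length $l-4\le k-4$ having $e(u,v)$ as one of its edges, such that (1) $v_2\in D$ and $v_{l-2}\in A$; and (2) there exist $v_1\in \widehat{In}_D(v_2)$ and $v_{l-1}\in Out_A(v_{l-2})$ such that $s,v_1,v_2,\dots,v_{l-1},t$ are pairwise distinct.
   Context: A path from $x$ to $y$ in $G$ is a vertex sequence $x=v_0,\dots,v_m=y$ with $(v_{i-1},v_i)\in E$; its length is $m$ and $V(p)$, $E(p)$ are its vertex and edge sets. A simple path has no repeated vertex. $SPG_k(s,t)$ is the subgraph of $G$ formed by the union of vertex sets and edge sets of all simple paths from $s$ to $t$ of length at most $k$. For a vertex $u$ and integer $l\ge 0$, $EV^*_l(s,u)$ exists iff there is at least one simple path from $s$ to $u$ of length at most $l$ not containing $t$, and then $EV^*_l(s,u)$ is the intersection of $V(p)$ over all such paths. Symmetrically, $EV^*_l(v,t)$ exists iff there is at least one simple path from $v$ to $t$ of length at most $l$ not containing $s$, and then it is the intersection of $V(p)$ over all such paths. The upper-bound graph $SPG^u_k(s,t)$ is the subgraph of $G$ whose edges are exactly those $e(u,v)\in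 E$ for which there exist integers $k_f,k_b\ge 0$ with $EV^*_{k_f}(s,u)$ and $EV^*_{k_b}(v,t)$ existing, $k_f+1+k_b\le k$, and $EV^*_{k_f}(s,u)\cap EV^*_{k_b}(v,t)=\emptyset$. An edge $e(u,v)\in E$ is definite if one of: (a) $u=s$ and $EV^*_{k-1}(v,t)$ exists; (b) $v=t$ and $EV^*_{k-1}(s,u)$ exists; (c) $EV^*_1(s,u)$ and $EV^*_{k-2}(v,t)$ exist and $u\notin EV^*_{k-2}(v,t)$; (d) $EV^*_1(v,t)$ and $EV^*_{k-2}(s,u)$ exist and $v\notin EV^*_{k-2}(s,u)$. An undetermined edge is an edge of $SPG^u_k(s,t)$ that is not definite. The departure set $D$ consists of vertices $w$ having an in-neighbour $x$ such that $x,w,s,t$ are pairwise distinct and $e(s,x),e(x,w)$ are edges of $SPG^u_k(s,t)$; for $w\in D$, $In_D(w)$ is the set of all such $x$. The arrival set $A$ consists of vertices $w$ having an out-neighbour $y$ such that $w,y,s,t$ are pairwise distinct and $e(w,y),e(y,t)$ are edges of $SPG^u_k(s,t)$; for $w\in A$, $Out_A(w)$ is the set of all such $y$. *)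

theory Defs
  imports Main
begin

definition is_path :: "('a \<times> 'a) set \<Rightarrow> 'a list \<Rightarrow> bool" where
  "is_path E p \<longleftrightarrow> p \<noteq> [] \<and> (\<forall>i. Suc i < length p \<longrightarrow> (p ! i, p ! Suc i) \<in> E)"

definition path_edges :: "'a list \<Rightarrow> ('a \<times> 'a) set" where
  "path_edges p = set (zip p (tl p))"

definition plen :: "'a list \<Rightarrow> nat" where
  "plen p = length p - 1"

definition simple_path :: "('a \<times> 'a) set \<Rightarrow> 'a \<Rightarrow> 'a \<Rightarrow> 'a list \<Rightarrow> bool" where
  "simple_path E x y p \<longleftrightarrow> is_path E p \<and> hd p = x \<and> last p = y \<and> distinct p"

definition SPG_edges :: "('a \<times> 'a) set \<Rightarrow> nat \<Rightarrow> 'a \<Rightarrow> 'a \<Rightarrow> ('a \<times> 'a) set" where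
  "SPG_edges E k s t = \<Union> {path_edges p | p. simple_path E s t p \<and> plen p \<le> k}"

text \<open>EV*_l(s,u): existence and value (forward, paths avoiding t).\<close>
definition EVf_ex :: "('a \<times> 'a) set \<Rightarrow> 'a \<Rightarrow> 'a \<Rightarrow> nat \<Rightarrow> 'a \<Rightarrow> bool" where
  "EVf_ex E s t l u \<longleftrightarrow> (\<exists>p. simple_path E s u p \<and> plen p \<le> l \<and> t \<notin> set p)"

definition EVf :: "('a \<times> 'a) set \<Rightarrow> 'a \<Rightarrow> 'a \<Rightarrow> nat \<Rightarrow> 'a \<Rightarrow> 'a set" where
  "EVf E s t l u = \<Inter> {set p | p. simple_path E s u p \<and> plen p \<le> l \<and> t \<notin> set p}"

text \<open>EV*_l(v,t): existence and value (backward, paths avoiding s).\<close>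
definition EVb_ex :: "('a \<times> 'a) set \<Rightarrow> 'a \<Rightarrow> 'a \<Rightarrow> nat \<Rightarrow> 'a \<Rightarrow> bool" where
  "EVb_ex E s t l v \<longleftrightarrow> (\<exists>p. simple_path E v t p \<and> plen p \<le> l \<and> s \<notin> set p)"

definition EVb :: "('a \<times> 'a) set \<Rightarrow> 'a \<Rightarrow> 'a \<Rightarrow> nat \<Rightarrow> 'a \<Rightarrow> 'a set" where
  "EVb E s t l v = \<Inter> {set p | p. simple_path E v t p \<and> plen p \<le> l \<and> s \<notin> set p}"

definition SPGu_edges :: "('a \<times> 'a) set \<Rightarrow> nat \<Rightarrow> 'a \<Rightarrow> 'a \<Rightarrow> ('a \<times> 'a) set" where
  "SPGu_edges E k s t = {(u, v). (u, v) \<in> E \<and>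
     (\<exists>kf kb. EVf_ex E s t kf u \<and> EVb_ex E s t kb v \<and> kf + 1 + kb \<le> k \<and>
              EVf E s t kf u \<inter> EVb E s t kb v = {})}"

definition definite_edge :: "('a \<times> 'a) set \<Rightarrow> nat \<Rightarrow> 'a \<Rightarrow> 'a \<Rightarrow> 'a \<Rightarrow> 'a \<Rightarrow> bool" where
  "definite_edge E k s t u v \<longleftrightarrow> (u, v) \<in> E \<and>
     ((u = s \<and> EVb_ex E s t (k - 1) v)
    \<or> (v = t \<and> EVf_ex E s t (k - 1) u)
    \<or> (EVf_ex E s t 1 u \<and> EVb_ex E s t (k - 2) v \<and> u \<notin> EVb E s t (k - 2) v)
    \<or> (EVb_ex E s t 1 v \<and> EVf_ex E s t (k - 2) u \<and> v \<notin> EVf E s t (k - 2) u))"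

definition undetermined_edge :: "('a \<times> 'a) set \<Rightarrow> nat \<Rightarrow> 'a \<Rightarrow> 'a \<Rightarrow> 'a \<Rightarrow> 'a \<Rightarrow> bool" where
  "undetermined_edge E k s t u v \<longleftrightarrow> (u, v) \<in> SPGu_edges E k s t \<and> \<not> definite_edge E k s t u v"

definition In_D :: "('a \<times> 'a) set \<Rightarrow> nat \<Rightarrow> 'a \<Rightarrow> 'a \<Rightarrow> 'a \<Rightarrow> 'a set" where
  "In_D E k s t w = {x. (x, w) \<in> E \<and> distinct [x, w, s, t] \<and>
      (s, x) \<in> SPGu_edges E k s t \<and> (x, w) \<in> SPGu_edges E k s t}"

definition Dep :: "('a \<times> 'a) set \<Rightarrow> nat \<Rightarrow> 'a \<Rightarrow> 'a \<Rightarrow> 'a set" where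
  "Dep E k s t = {w. In_D E k s t w \<noteq> {}}"

definition Out_A :: "('a \<times> 'a) set \<Rightarrow> nat \<Rightarrow> 'a \<Rightarrow> 'a \<Rightarrow> 'a \<Rightarrow> 'a set" where
  "Out_A E k s t w = {y. (w, y) \<in> E \<and> distinct [w, y, s, t] \<and>
      (w, y) \<in> SPGu_edges E k s t \<and> (y, t) \<in> SPGu_edges E k s t}"

definition Arr :: "('a \<times> 'a) set \<Rightarrow> nat \<Rightarrow> 'a \<Rightarrow> 'a \<Rightarrow> 'a set" where
  "Arr E k s t = {w. Out_A E k s t w \<noteq> {}}"

end

theory Submission
  imports Defs
begin

text \<open>Let \<open>e(u,v)\<close> lie on a simple \<open>s\<close>-\<open>t\<close> path \<open>p\<close> of length at most \<open>k\<close>. The two halves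
  of \<open>p\<close> witness the existence conditions of the criteria (a)--(d) for definite edges, so an
  undetermined edge has at least two edges of \<open>p\<close> before \<open>u\<close> and two after \<open>v\<close>. Hence
  \<open>p = s a q b t\<close> with \<open>e\<close> on \<open>q\<close>, and since every edge of \<open>p\<close> lies in the upper-bound graph,
  \<open>a \<in> In_D (hd q)\<close> and \<open>b \<in> Out_A (last q)\<close>. The truncated set \<open>InHat (hd q)\<close> still offers a
  replacement for \<open>a\<close>: it has \<open>k - 2\<close> elements, whereas apart from \<open>s\<close>, \<open>t\<close> and \<open>hd q\<close> (which differ from
  every element of \<open>In_D (hd q)\<close>) only \<open>b\<close> and \<open>tl q\<close>, at most \<open>k - 3\<close> vertices, must be avoided.
  Conversely, for \<open>v1 \<in> In_D (hd q)\<close> and \<open>vl1 \<in> Out_A (last q)\<close> the path \<open>s v1 q vl1 t\<close> is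
  simple of length \<open>|q| + 3 \<le> k\<close>.\<close>

lemma path_edges_Cons_Cons: "path_edges (x # y # r) = insert (x, y) (path_edges (y # r))"
  by (simp add: path_edges_def)

lemma in_path_edges_iff: "(x, y) \<in> path_edges p \<longleftrightarrow> (\<exists>xs ys. p = xs @ x # y # ys)"
  by (induction p rule: induct_list012)
    (auto simp: path_edges_def path_edges_Cons_Cons Cons_eq_append_conv)

lemma is_path_Cons_Cons: "is_path E (x # y # r) \<longleftrightarrow> (x, y) \<in> E \<and> is_path E (y # r)"
  unfolding is_path_def by (auto simp: nth_Cons split: nat.splits)

lemma is_path_singleton [simp]: "is_path E [x]"
  by (simp add: is_path_def)

lemma is_path_append:
  assumes "xs \<noteq> []" "ys \<noteq> []"
  shows "is_path E (xs @ ys) \<longleftrightarrow> is_path E xs \<and> is_path E ys \<and> (last xs, hd ys) \<in> E"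
  using assms
proof (induction xs rule: induct_list012)
  case (2 x)
  then show ?case by (cases ys) (auto simp: is_path_Cons_Cons)
next
  case (3 x y r)
  then show ?case by (auto simp: is_path_Cons_Cons)
qed simp

lemma is_path_infix: "is_path E (xs @ q @ ys) \<Longrightarrow> q \<noteq> [] \<Longrightarrow> is_path E q"
  by (cases "xs = []"; cases "ys = []") (simp_all add: is_path_append)

lemma path_edges_infix: "path_edges q \<subseteq> path_edges (xs @ q @ ys)"
proof
  fix e assume "e \<in> path_edges q"
  then obtain x y pre post where e: "e = (x, y)" and "q = pre @ x # y # post"
    by (cases e) (auto simp: in_path_edges_iff)
  then have "xs @ q @ ys = (xs @ pre) @ x # y # (post @ ys)"
    by simp
  then show "e \<in> path_edges (xs @ q @ ys)"
    unfolding e in_path_edges_iff by blast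
qed

lemma simple_path_split_at_edge:
  assumes "simple_path E s t (xs @ x # y # ys)"
  shows "simple_path E s x (xs @ [x])" "simple_path E y t (y # ys)"
    and "t \<notin> set (xs @ [x])" "s \<notin> set (y # ys)" "(x, y) \<in> E"
proof -
  have p: "is_path E ((xs @ [x]) @ y # ys)" "distinct ((xs @ [x]) @ y # ys)"
    and ends: "hd (xs @ x # y # ys) = s" "last (y # ys) = t"
    using assms by (simp_all add: simple_path_def)
  have "is_path E (xs @ [x])" "is_path E (y # ys)" "(x, y) \<in> E"
    using is_path_append[of "xs @ [x]" "y # ys" E] p(1) by auto
  moreover have "hd (xs @ [x]) = s" "s \<in> set (xs @ [x])" "t \<in> set (y # ys)"
    using ends by (cases xs; auto)+
  ultimately show "simple_path E s x (xs @ [x])" "simple_path E y t (y # ys)"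
    "t \<notin> set (xs @ [x])" "s \<notin> set (y # ys)" "(x, y) \<in> E"
    using p(2) ends by (auto simp: simple_path_def)
qed

lemma EVf_exI:
  "simple_path E s u p \<Longrightarrow> plen p \<le> l \<Longrightarrow> t \<notin> set p \<Longrightarrow> EVf_ex E s t l u"
  unfolding EVf_ex_def by blast

lemma EVf_subset:
  "simple_path E s u p \<Longrightarrow> plen p \<le> l \<Longrightarrow> t \<notin> set p \<Longrightarrow> EVf E s t l u \<subseteq> set p"
  unfolding EVf_def by blast

lemma EVb_exI:
  "simple_path E v t p \<Longrightarrow> plen p \<le> l \<Longrightarrow> s \<notin> set p \<Longrightarrow> EVb_ex E s t l v"
  unfolding EVb_ex_def by blast

lemma EVb_subset:
  "simple_path E v t p \<Longrightarrow> plen p \<le> l \<Longrightarrow> s \<notin> set p \<Longrightarrow> EVb E s t l v \<subseteq> set p"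
  unfolding EVb_def by blast

lemma path_edges_subset_SPG_edges:
  "simple_path E s t p \<Longrightarrow> plen p \<le> k \<Longrightarrow> path_edges p \<subseteq> SPG_edges E k s t"
  unfolding SPG_edges_def by blast

lemma SPG_edges_subset_SPGu_edges: "SPG_edges E k s t \<subseteq> SPGu_edges E k s t"
proof
  fix e assume "e \<in> SPG_edges E k s t"
  then obtain p where p: "simple_path E s t p" "plen p \<le> k" "e \<in> path_edges p"
    unfolding SPG_edges_def by blast
  obtain x y xs ys where e: "e = (x, y)" and split: "p = xs @ x # y # ys"
    using p(3) by (cases e) (auto simp: in_path_edges_iff)
  note parts = simple_path_split_at_edge[OF p(1)[unfolded split]]
  have "set (xs @ [x]) \<inter> set (y # ys) = {}"
    using p(1) by (simp add: split simple_path_def)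
  then have "EVf E s t (plen (xs @ [x])) x \<inter> EVb E s t (plen (y # ys)) y = {}"
    using EVf_subset[OF parts(1) order_refl parts(3)] EVb_subset[OF parts(2) order_refl parts(4)]
    by blast
  moreover have "plen (xs @ [x]) + 1 + plen (y # ys) \<le> k"
    using p(2) by (simp add: split plen_def)
  ultimately show "e \<in> SPGu_edges E k s t"
    using parts(5) EVf_exI[OF parts(1) order_refl parts(3)] EVb_exI[OF parts(2) order_refl parts(4)]
    unfolding e SPGu_edges_def by blast
qed

lemma definite_edge_near_source:
  assumes p: "simple_path E s t (xs @ u # v # ys)" and len: "plen (xs @ u # v # ys) \<le> k"
    and near: "length xs \<le> 1"
  shows "definite_edge E k s t u v"
proof -
  note parts = simple_path_split_at_edge[OF p]
  consider "xs = []" | "xs = [s]"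
    using near p by (cases xs) (auto simp: simple_path_def)
  then show ?thesis
  proof cases
    case 1
    have "EVb_ex E s t (k - 1) v"
      using EVb_exI[OF parts(2) _ parts(4)] len by (simp add: 1 plen_def)
    with parts(5) show ?thesis
      using p by (simp add: 1 definite_edge_def simple_path_def)
  next
    case 2
    have "EVf_ex E s t 1 u"
      using EVf_exI[OF parts(1) _ parts(3)] by (simp add: 2 plen_def)
    moreover have "EVb_ex E s t (k - 2) v" and "EVb E s t (k - 2) v \<subseteq> set (v # ys)"
      using EVb_exI[OF parts(2) _ parts(4)] EVb_subset[OF parts(2) _ parts(4)] len
      by (simp_all add: 2 plen_def)
    moreover have "u \<notin> set (v # ys)"
      using p by (simp add: simple_path_def)
    ultimately show ?thesis
      using parts(5) unfolding definite_edge_def by blast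
  qed
qed

lemma definite_edge_near_target:
  assumes p: "simple_path E s t (xs @ u # v # ys)" and len: "plen (xs @ u # v # ys) \<le> k"
    and near: "length ys \<le> 1"
  shows "definite_edge E k s t u v"
proof -
  note parts = simple_path_split_at_edge[OF p]
  consider "ys = []" | "ys = [t]"
    using near p by (cases ys) (auto simp: simple_path_def)
  then show ?thesis
  proof cases
    case 1
    have "EVf_ex E s t (k - 1) u"
      using EVf_exI[OF parts(1) _ parts(3)] len by (simp add: 1 plen_def)
    with parts(5) show ?thesis
      using p by (simp add: 1 definite_edge_def simple_path_def)
  next
    case 2
    have "EVb_ex E s t 1 v"
      using EVb_exI[OF parts(2) _ parts(4)] by (simp add: 2 plen_def)
    moreover have "EVf_ex E s t (k - 2) u" and "EVf E s t (k - 2) u \<subseteq> set (xs @ [u])"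
      using EVf_exI[OF parts(1) _ parts(3)] EVf_subset[OF parts(1) _ parts(3)] len
      by (simp_all add: 2 plen_def)
    moreover have "v \<notin> set (xs @ [u])"
      using p by (auto simp: simple_path_def)
    ultimately show ?thesis
      using parts(5) unfolding definite_edge_def by blast
  qed
qed

lemma SPG_path_around_undetermined_edge:
  assumes undet: "undetermined_edge E k s t u v" and uv: "(u, v) \<in> SPG_edges E k s t"
  obtains a q b where "simple_path E s t (s # a # q @ [b, t])" "length q + 3 \<le> k"
    and "(u, v) \<in> path_edges q"
proof -
  obtain p where p: "simple_path E s t p" "plen p \<le> k" "(u, v) \<in> path_edges p"
    using uv unfolding SPG_edges_def by blast
  then obtain xs ys where split: "p = xs @ u # v # ys"
    by (auto simp: in_path_edges_iff)
  have not_definite: "\<not> definite_edge E k s t u v"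
    using undet unfolding undetermined_edge_def by blast
  have path: "simple_path E s t (xs @ u # v # ys)" "plen (xs @ u # v # ys) \<le> k"
    using p(1,2) unfolding split .
  have "\<not> length xs \<le> 1" "\<not> length ys \<le> 1"
    using definite_edge_near_source[OF path] definite_edge_near_target[OF path] not_definite
    by auto
  then obtain x0 a xs' ys' b c where xs: "xs = x0 # a # xs'" and ys: "ys = ys' @ [b, c]"
    by (cases xs; cases "tl xs"; cases ys rule: rev_exhaust; cases "butlast ys" rule: rev_exhaust)
      auto
  have "x0 = s" "c = t"
    using p(1) unfolding split xs ys simple_path_def by simp_all
  then have p_eq: "p = s # a # (xs' @ u # v # ys') @ [b, t]"
    by (simp add: split xs ys)
  then show thesis
    using that[of a "xs' @ u # v # ys'" b] p by (auto simp: in_path_edges_iff plen_def)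
qed

lemma In_D_Out_A_of_SPG_path:
  assumes p: "simple_path E s t (s # a # q @ [b, t])" and len: "length q + 3 \<le> k"
    and "q \<noteq> []"
  shows "a \<in> In_D E k s t (hd q)" "b \<in> Out_A E k s t (last q)"
proof -
  let ?p = "s # a # q @ [b, t]"
  have splits: "?p = [] @ s # a # (q @ [b, t])" "?p = [s] @ a # hd q # (tl q @ [b, t])"
    "?p = (s # a # butlast q) @ last q # b # [t]" "?p = (s # a # q) @ b # t # []"
    using append_butlast_last_id[OF \<open>q \<noteq> []\<close>] hd_Cons_tl[OF \<open>q \<noteq> []\<close>]
    by (metis append_Cons append_Nil append_assoc)+
  then have "{(s, a), (a, hd q), (last q, b), (b, t)} \<subseteq> path_edges ?p"
    unfolding insert_subset in_path_edges_iff by blast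
  also have "\<dots> \<subseteq> SPG_edges E k s t"
    using path_edges_subset_SPG_edges[OF p] len by (simp add: plen_def)
  also have "\<dots> \<subseteq> SPGu_edges E k s t"
    by (rule SPG_edges_subset_SPGu_edges)
  finally have "{(s, a), (a, hd q), (last q, b), (b, t)} \<subseteq> SPGu_edges E k s t" .
  moreover have "(a, hd q) \<in> E" "(last q, b) \<in> E"
    using simple_path_split_at_edge(5) p splits by metis+
  moreover have "distinct [a, hd q, s, t]" "distinct [last q, b, s, t]"
    using p \<open>q \<noteq> []\<close> hd_in_set last_in_set by (fastforce simp: simple_path_def)+
  ultimately show "a \<in> In_D E k s t (hd q)" "b \<in> Out_A E k s t (last q)"
    unfolding In_D_def Out_A_def by auto
qed

lemma SPG_edges_through_departure_arrival:
  assumes x: "x \<in> In_D E k s t (hd q)" and y: "y \<in> Out_A E k s t (last q)"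
    and q: "is_path E q" and dist: "distinct (s # x # q @ [y, t])" and len: "length q + 3 \<le> k"
  shows "path_edges q \<subseteq> SPG_edges E k s t"
proof -
  have "q \<noteq> []"
    using q by (simp add: is_path_def)
  have "(s, x) \<in> E" "(x, hd q) \<in> E" "(last q, y) \<in> E" "(y, t) \<in> E"
    using x y unfolding In_D_def Out_A_def SPGu_edges_def by auto
  moreover have "is_path E (q @ [y, t])"
    using calculation q \<open>q \<noteq> []\<close> by (simp add: is_path_append is_path_Cons_Cons)
  ultimately have "is_path E ([s, x] @ q @ [y, t])"
    using \<open>q \<noteq> []\<close> by (cases q) (simp_all add: is_path_Cons_Cons)
  then have "simple_path E s t ([s, x] @ q @ [y, t])"
    using dist by (simp add: simple_path_def)
  then have "path_edges ([s, x] @ q @ [y, t]) \<subseteq> SPG_edges E k s t"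
    using len by (intro path_edges_subset_SPG_edges) (simp_all add: plen_def)
  then show ?thesis
    using path_edges_infix by blast
qed

lemma bex_notin_small_set:
  assumes "if n < card I then card H = n else H = I"
    and "a \<in> I" "a \<notin> B" "finite B" "card B < n"
  shows "\<exists>x\<in>H. x \<notin> B"
proof (cases "n < card I")
  case True
  then have "card B < card H"
    using assms(1,5) by simp
  then show ?thesis
    using card_mono[OF \<open>finite B\<close>] by (meson not_le subsetI)
next
  case False
  then show ?thesis
    using assms(1-3) by auto
qed

lemma truncated_In_D_replacement:
  assumes "H \<subseteq> In_D E k s t (hd q)"
    and "if k - 2 < card (In_D E k s t (hd q)) then card H = k - 2 else H = In_D E k s t (hd q)"
    and "a \<in> In_D E k s t (hd q)" "distinct (s # a # q @ [b, t])" "length q + 3 \<le> k"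
    and "q \<noteq> []"
  obtains x where "x \<in> H" "distinct (s # x # q @ [b, t])"
proof -
  have "card (insert b (set (tl q))) \<le> Suc (length (tl q))"
    using card_length[of "tl q"] by (simp add: card_insert_if)
  then have "card (insert b (set (tl q))) < k - 2"
    using assms(5,6) by simp
  moreover have "a \<notin> insert b (set (tl q))"
    using assms(4) by (cases q) auto
  ultimately obtain x where "x \<in> H" "x \<notin> insert b (set (tl q))"
    using bex_notin_small_set[OF assms(2,3)] by blast
  moreover have "distinct (s # x # q @ [b, t])"
    using calculation assms(1,4) by (cases q) (auto simp: In_D_def)
  ultimately show thesis
    using that by blast
qed

theorem theorem5p8:
  fixes E :: "('a \<times> 'a) set" and s t u v :: 'a and k :: nat
    and InHat :: "'a \<Rightarrow> 'a set"
  assumes "finite E"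
    and "s \<noteq> t"
    and "k \<ge> 5"
    and "\<And>w. w \<in> Dep E k s t \<Longrightarrow> InHat w \<subseteq> In_D E k s t w \<and>
            (if card (In_D E k s t w) > k - 2 then card (InHat w) = k - 2
             else InHat w = In_D E k s t w)"
    and "undetermined_edge E k s t u v"
  shows "(u, v) \<in> SPG_edges E k s t \<longleftrightarrow>
    (\<exists>l q. 4 \<le> l \<and> length q + 3 = l \<and> l - 4 \<le> k - 4 \<and>
       is_path E q \<and> distinct q \<and> (u, v) \<in> path_edges q \<and>
       hd q \<in> Dep E k s t \<and> last q \<in> Arr E k s t \<and>
       (\<exists>v1 \<in> InHat (hd q). \<exists>vl1 \<in> Out_A E k s t (last q).
          distinct ([s, v1] @ q @ [vl1, t])))"
    (is "_ \<longleftrightarrow> ?extendable")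
proof
  assume ?extendable
  then obtain q v1 vl1 where q: "is_path E q" "length q + 3 \<le> k" "(u, v) \<in> path_edges q"
    "hd q \<in> Dep E k s t" and v1: "v1 \<in> InHat (hd q)" and vl1: "vl1 \<in> Out_A E k s t (last q)"
    and dist: "distinct (s # v1 # q @ [vl1, t])"
    using assms(3) by auto
  moreover have "v1 \<in> In_D E k s t (hd q)"
    using assms(4)[OF q(4)] v1 by blast
  ultimately show "(u, v) \<in> SPG_edges E k s t"
    using SPG_edges_through_departure_arrival[OF _ vl1 q(1) dist q(2)] by blast
next
  assume "(u, v) \<in> SPG_edges E k s t"
  then obtain a q b where p: "simple_path E s t (s # a # q @ [b, t])" and len: "length q + 3 \<le> k"
    and uv: "(u, v) \<in> path_edges q"
    using SPG_path_around_undetermined_edge[OF assms(5)] by blast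
  have "q \<noteq> []"
    using uv by (auto simp: path_edges_def)
  note endpoints = In_D_Out_A_of_SPG_path[OF p len \<open>q \<noteq> []\<close>]
  then have dep: "hd q \<in> Dep E k s t" and arr: "last q \<in> Arr E k s t"
    unfolding Dep_def Arr_def by blast+
  have dist: "distinct (s # a # q @ [b, t])" and "is_path E ([s, a] @ q @ [b, t])"
    using p by (simp_all add: simple_path_def)
  then have "is_path E q"
    using is_path_infix \<open>q \<noteq> []\<close> by blast
  obtain x where "x \<in> InHat (hd q)" "distinct (s # x # q @ [b, t])"
    using truncated_In_D_replacement[OF _ _ endpoints(1) dist len \<open>q \<noteq> []\<close>] assms(4)[OF dep]
    by blast
  then show ?extendable
    using \<open>is_path E q\<close> \<open>q \<noteq> []\<close> \<open>x \<in> InHat (hd q)\<close> dist uv dep arr endpoints(2) len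
    by (intro exI[of _ "length q + 3"] exI[of _ q]) (auto simp: Suc_le_eq)
qed

end
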